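(* Let $p_0\in\mathbb{N}$, $z\in\tilde{\mathcal{A}}_{conv.}$ and $X:=a^{p_0}+bz\in\tilde{\mathcal{A}}_{conv.}$. If $U\in\widehat{\mathcal{A}}$ is such that $UX\in\tilde{\mathcal{A}}_{conv.}$, then $U\in\tilde{\mathcal{A}}_{conv.}$.
   Context: $\widehat{\mathcal{A}}$ is the algebra of formal power series $\sum_{p,q\ge0}\gamma_{p,q}a^pb^q$ in variables $a,b$ with $ab-ba=b^2$ (the $(a,b)$-adic completion of the polynomial algebra with this relation). $\tilde{\mathcal{A}}_{conv.}\subset\widehat{\mathcal{A}}$ is the subalgebra of series with $|\gamma_{p,q}|\le C_RR^{p+q}q!$ for some $R>1$, $C_R>0$. *)

theory Defs
  imports Complex_Main
begin

text \<open>Elements of the completed algebra: coefficient families gamma p q of the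
normally ordered monomials a^p b^q (relation ab - ba = b^2).\<close>
type_synonym ser = "nat \<Rightarrow> nat \<Rightarrow> complex"

text \<open>Normal ordering: b^q a^r = sum over (i,j) of nord q r i j * a^i b^j.
Recurrence from b^j a = a b^j - j b^(j+1).\<close>
fun nord :: "nat \<Rightarrow> nat \<Rightarrow> nat \<Rightarrow> nat \<Rightarrow> int" where
  "nord q 0 i j = (if i = 0 \<and> j = q then 1 else 0)"
| "nord q (Suc r) i j =
     (if i \<ge> 1 then nord q r (i - 1) j else 0)
     - (if j \<ge> 1 then int (j - 1) * nord q r i (j - 1) else 0)"

definition ser_add :: "ser \<Rightarrow> ser \<Rightarrow> ser" where
  "ser_add x y = (\<lambda>p q. x p q + y p q)"

text \<open>Product: (sum g_pq a^p b^q)(sum d_rs a^r b^s)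
 = sum g_pq d_rs a^p (b^q a^r) b^s; the coefficient of a^m b^n is a finite sum
 since nord q r i j = 0 unless i + j = q + r.\<close>
definition ser_mul :: "ser \<Rightarrow> ser \<Rightarrow> ser" where
  "ser_mul x y = (\<lambda>m n. \<Sum>p\<le>m. \<Sum>s\<le>n. \<Sum>q\<le>(m - p) + (n - s).
       x p q * y ((m - p) + (n - s) - q) s
         * of_int (nord q ((m - p) + (n - s) - q) (m - p) (n - s)))"

definition gen_a_pow :: "nat \<Rightarrow> ser" where
  "gen_a_pow k = (\<lambda>p q. if p = k \<and> q = 0 then 1 else 0)"

definition gen_b :: ser where
  "gen_b = (\<lambda>p q. if p = 0 \<and> q = 1 then 1 else 0)"

definition conv :: "ser \<Rightarrow> bool" where
  "conv x \<longleftrightarrow> (\<exists>R>1. \<exists>C>0. \<forall>p q. norm (x p q) \<le> C * R ^ (p + q) * fact q)"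

end

theory Submission
  imports Defs
begin

text \<open>Compare the coefficients of \<open>a^(p + p0) b^n\<close> in \<open>V = U X\<close>.
The \<open>b\<close>-free part of \<open>X\<close> is \<open>a^p0\<close>, and normal ordering \<open>b^q a^r\<close>
only produces monomials \<open>a^i b^j\<close> with \<open>j \<ge> q\<close>, so this coefficient is \<open>U p n\<close>
plus a finite combination of coefficients \<open>U p' q\<close> with \<open>q < n\<close>. Strong induction
on \<open>n\<close> then gives \<open>|U p n| \<le> M R^p S^n n!\<close>: the normal-ordering coefficients
are explicit (at most \<open>2^r\<close> times a rising factorial, which the factorials absorb),
and once \<open>S\<close> is large compared to \<open>R\<close> every other term is at most
\<open>M R^p S^n n! / 16\<close> times a geometric weight \<open>2^-(i + k + s)\<close> in its three
summation indices.\<close>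

lemma nord_eq:
  "nord q r i j = (if i \<le> r \<and> i + j = q + r
     then (-1) ^ (r - i) * int (r choose (r - i)) * int (pochhammer q (r - i)) else 0)"
proof (induction r arbitrary: i j)
  case 0
  then show ?case by auto
next
  case (Suc r)
  show ?case
  proof (cases "i \<le> Suc r \<and> i + j = q + Suc r")
    case False
    then show ?thesis by (auto simp: Suc)
  next
    case True
    show ?thesis
    proof (cases i)
      case 0
      then show ?thesis using True by (auto simp: Suc pochhammer_Suc algebra_simps)
    next
      case (Suc i')
      define k where "k = r - i'"
      have jq: "j = q + k" and ik: "i' + k = r" using True Suc k_def by auto
      show ?thesis
      proof (cases k)
        case 0
        then show ?thesis using Suc.IH True Suc ik jq by auto
      next
        case (Suc k')
        have "nord q (Suc r) i j
            = (-1) ^ k * int (r choose k) * int (pochhammer q k)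
              - int (q + k') * ((-1) ^ k' * int (r choose k') * int (pochhammer q k'))"
          using Suc.IH \<open>i = Suc i'\<close> ik jq Suc by auto
        also have "\<dots> = (-1) ^ k * int (Suc r choose k) * int (pochhammer q k)"
          using Suc by (simp add: pochhammer_Suc algebra_simps)
        finally show ?thesis
          using True \<open>i = Suc i'\<close> ik by (simp add: k_def)
      qed
    qed
  qed
qed

lemma nord_eq_0: "\<not> (i \<le> r \<and> i + j = q + r) \<Longrightarrow> nord q r i j = 0"
  by (auto simp: nord_eq)

lemma nord_diag: "nord q r r q = 1"
  by (simp add: nord_eq)

lemma norm_nord_le:
  "norm (of_int (nord q r i j) :: complex) \<le> 2 ^ r * real (pochhammer q (r - i))"
proof -
  have "\<bar>real_of_int (nord q r i j)\<bar> \<le> real (r choose (r - i)) * real (pochhammer q (r - i))"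
    by (simp add: nord_eq abs_mult)
  also have "\<dots> \<le> 2 ^ r * real (pochhammer q (r - i))"
    using binomial_le_pow2[of r "r - i"]
    by (intro mult_right_mono) (auto simp flip: of_nat_power)
  finally show ?thesis by simp
qed

lemma fact_mult_pochhammer_le: "fact q * real (pochhammer q k) \<le> fact (q + k)"
proof (induction k)
  case (Suc k)
  have "fact q * real (pochhammer q (Suc k)) = fact q * real (pochhammer q k) * real (q + k)"
    by (simp add: pochhammer_Suc)
  also have "\<dots> \<le> fact (q + k) * real (Suc (q + k))"
    using Suc by (intro mult_mono) auto
  finally show ?case by (simp add: algebra_simps)
qed simp

lemma fact_mult_fact_le: "fact a * fact b \<le> (fact (a + b) :: real)"
proof -
  have "fact a * fact b * 1 \<le> (fact a * fact b * ((a + b) choose a) :: nat)"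
    by (intro mult_left_mono) (auto simp: Suc_le_eq)
  also have "\<dots> = fact (a + b)"
    using binomial_fact_lemma[of a "a + b"] by simp
  finally show ?thesis
    by (metis of_nat_fact of_nat_le_iff of_nat_mult mult.right_neutral)
qed

lemma sum_half_power_le: "(\<Sum>q\<le>j. (1/2::real) ^ q) \<le> 2"
  using geometric_sum_less[of "1/2::real" "{..j}"] by simp

lemma sum_half_power_diff_le: "(\<Sum>q\<le>j. (1/2::real) ^ (j - q)) \<le> 2"
proof -
  have "(\<Sum>q\<le>j. (1/2::real) ^ (j - q)) = (\<Sum>q\<le>j. (1/2) ^ q)"
    by (rule sum.reindex_bij_witness[of _ "\<lambda>q. j - q" "\<lambda>q. j - q"]) auto
  then show ?thesis using sum_half_power_le by simp
qed

lemma ser_mul_gen_b: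
  "ser_mul gen_b z m n
     = (\<Sum>s<n. z (m + n - 1 - s) s * of_int (nord 1 (m + n - 1 - s) m (n - s)))"
proof -
  have "ser_mul gen_b z m n = (\<Sum>s\<le>n. \<Sum>q\<le>m + (n - s).
      gen_b 0 q * z (m + (n - s) - q) s * of_int (nord q (m + (n - s) - q) m (n - s)))"
    unfolding ser_mul_def by (subst sum.atMost_shift) (simp add: gen_b_def)
  also have "\<dots> = (\<Sum>s\<le>n. if 1 \<le> m + (n - s)
      then z (m + (n - s) - 1) s * of_int (nord 1 (m + (n - s) - 1) m (n - s)) else 0)"
    unfolding gen_b_def by (simp add: if_distrib[of "\<lambda>x. x * _"] sum.delta' cong: if_cong)
  also have "\<dots> = (\<Sum>s<n. z (m + n - 1 - s) s * of_int (nord 1 (m + n - 1 - s) m (n - s)))"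
    by (simp add: lessThan_Suc_atMost[symmetric] nord_eq_0)
      (intro sum.cong; simp add: Suc_diff_Suc)
  finally show ?thesis .
qed

lemma conv_ser_mul_gen_b:
  assumes "conv z"
  shows "conv (ser_mul gen_b z)"
proof -
  obtain R C where R: "R > 1" and C: "C > 0"
    and z_le: "\<And>p q. norm (z p q) \<le> C * R ^ (p + q) * fact q"
    using assms unfolding conv_def by blast
  have term_le: "norm (z r s * of_int (nord 1 r m (n - s))) \<le> C * (2 * R) ^ (m + n) * fact (n - 1)"
    if "s < n" "r = m + n - 1 - s" for m n r s
  proof -
    have "norm (of_int (nord 1 r m (n - s)) :: complex) \<le> 2 ^ r * fact (r - m)"
      using norm_nord_le[of 1 r m "n - s"] by (metis of_nat_fact pochhammer_fact)
    then have "norm (z r s * of_int (nord 1 r m (n - s)))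
        \<le> (C * R ^ (r + s) * fact s) * (2 ^ r * fact (r - m))"
      unfolding norm_mult using z_le C R by (intro mult_mono) auto
    also have "\<dots> = C * (R ^ (r + s) * 2 ^ r) * (fact (r - m) * fact s)"
      by (simp add: algebra_simps)
    also have "\<dots> \<le> C * (R ^ (m + n) * 2 ^ (m + n)) * fact (n - 1)"
      using that R C fact_mult_fact_le[of "r - m" s]
      by (intro mult_mono power_increasing) auto
    finally show ?thesis by (simp add: power_mult_distrib mult.commute)
  qed
  show ?thesis
    unfolding conv_def
  proof (intro exI conjI allI)
    fix m n
    have "norm (ser_mul gen_b z m n) \<le> (\<Sum>s<n. C * (2 * R) ^ (m + n) * fact (n - 1))"
      unfolding ser_mul_gen_b by (intro sum_norm_le term_le) auto
    also have "\<dots> \<le> C * (2 * R) ^ (m + n) * fact n"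
      using C R by (cases n) (simp_all add: algebra_simps)
    finally show "norm (ser_mul gen_b z m n) \<le> C * (2 * R) ^ (m + n) * fact n" .
  qed (use R C in auto)
qed

lemma conv_gen_a_pow: "conv (gen_a_pow k)"
  unfolding conv_def gen_a_pow_def
  by (intro exI[of _ "2::real"] exI[of _ "1::real"] conjI allI) auto

lemma conv_ser_add:
  assumes "conv x" "conv y"
  shows "conv (ser_add x y)"
proof -
  obtain R C where R: "R > 1" and C: "C > 0"
    and x_le: "\<And>p q. norm (x p q) \<le> C * R ^ (p + q) * fact q"
    using assms(1) unfolding conv_def by blast
  obtain R' C' where R': "R' > 1" and C': "C' > 0"
    and y_le: "\<And>p q. norm (y p q) \<le> C' * R' ^ (p + q) * fact q"
    using assms(2) unfolding conv_def by blast
  show ?thesis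
    unfolding conv_def
  proof (intro exI conjI allI)
    fix p q
    have "norm (ser_add x y p q) \<le> C * R ^ (p + q) * fact q + C' * R' ^ (p + q) * fact q"
      unfolding ser_add_def using x_le y_le by (intro norm_triangle_le add_mono)
    also have "\<dots> \<le> C * max R R' ^ (p + q) * fact q + C' * max R R' ^ (p + q) * fact q"
      using R R' C C' by (intro add_mono mult_right_mono mult_left_mono power_mono) auto
    finally show "norm (ser_add x y p q) \<le> (C + C') * max R R' ^ (p + q) * fact q"
      by (simp add: algebra_simps)
  qed (use R C C' in auto)
qed

lemma ser_mul_coeff_eq_diag_add:
  assumes X0: "\<And>r. X r 0 = (if r = p0 then 1 else 0)"
  shows "ser_mul U X (p + p0) n
    = U p n + (\<Sum>p'\<le>p + p0. \<Sum>s\<le>n. \<Sum>q\<le>(p + p0 - p') + (n - s).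
      if p' = p \<and> s = 0 \<and> q = n then 0
      else U p' q * X ((p + p0 - p') + (n - s) - q) s
             * of_int (nord q ((p + p0 - p') + (n - s) - q) (p + p0 - p') (n - s)))"
    (is "_ = _ + (\<Sum>p'\<le>_. \<Sum>s\<le>_. \<Sum>q\<le>_. ?E p' s q)")
proof -
  define F where "F p' s q = U p' q * X ((p + p0 - p') + (n - s) - q) s
      * of_int (nord q ((p + p0 - p') + (n - s) - q) (p + p0 - p') (n - s))" for p' s q
  have "F p 0 n = U p n"
    unfolding F_def using X0 nord_diag[of n p0] by simp
  then have F_split: "F p' s q = ?E p' s q + (if p' = p \<and> s = 0 \<and> q = n then U p n else 0)"
    for p' s q
    unfolding F_def by auto
  have diag_q: "(\<Sum>q\<le>(p + p0 - p') + (n - s). if p' = p \<and> s = 0 \<and> q = n then U p n else 0)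
      = (if p' = p \<and> s = 0 then U p n else 0)" for p' s
    by (cases "p' = p \<and> s = 0") auto
  have diag_s: "(\<Sum>s\<le>n. if p' = p \<and> s = 0 then U p n else 0) = (if p' = p then U p n else 0)"
    for p'
    by (cases "p' = p") auto
  have "ser_mul U X (p + p0) n
      = (\<Sum>p'\<le>p + p0. \<Sum>s\<le>n. \<Sum>q\<le>(p + p0 - p') + (n - s). F p' s q)"
    unfolding ser_mul_def F_def by simp
  also have "\<dots>
      = (\<Sum>p'\<le>p + p0. \<Sum>s\<le>n. \<Sum>q\<le>(p + p0 - p') + (n - s). ?E p' s q) + U p n"
    unfolding F_split sum.distrib diag_q diag_s by simp
  finally show ?thesis by simp
qed

lemma norm_triple_sum_le:
  fixes E :: "nat \<Rightarrow> nat \<Rightarrow> nat \<Rightarrow> 'a::real_normed_vector"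
  assumes E_le: "\<And>p s q. p \<le> m \<Longrightarrow> s \<le> n \<Longrightarrow> q \<le> n - s
      \<Longrightarrow> norm (E p s q) * 2 ^ ((m - p) + (n - s - q) + s) \<le> c"
    and E_0: "\<And>p s q. n - s < q \<Longrightarrow> E p s q = 0"
  shows "norm (\<Sum>p\<le>m. \<Sum>s\<le>n. \<Sum>q\<le>(m - p) + (n - s). E p s q) \<le> 8 * c"
proof -
  have "0 \<le> norm (E 0 0 0) * 2 ^ ((m - 0) + (n - 0 - 0) + 0)"
    by simp
  then have c: "c \<ge> 0"
    using E_le[of 0 0 0] by linarith
  have q_sum:
    "norm (\<Sum>q\<le>(m - p) + (n - s). E p s q) \<le> 2 * c * ((1/2) ^ (m - p) * (1/2) ^ s)"
    if "p \<le> m" "s \<le> n" for p s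
  proof -
    have "(\<Sum>q\<le>(m - p) + (n - s). E p s q) = (\<Sum>q\<le>n - s. E p s q)"
      using E_0 by (intro sum.mono_neutral_right) auto
    moreover have "norm (E p s q) \<le> c * (1/2) ^ (m - p) * (1/2) ^ s * (1/2) ^ (n - s - q)"
      if "q \<le> n - s" for q
      using E_le[OF \<open>p \<le> m\<close> \<open>s \<le> n\<close> that]
      by (simp add: field_simps power_add power_one_over)
    ultimately have "norm (\<Sum>q\<le>(m - p) + (n - s). E p s q)
        \<le> (\<Sum>q\<le>n - s. c * (1/2) ^ (m - p) * (1/2) ^ s * (1/2) ^ (n - s - q))"
      by (auto intro: sum_norm_le)
    also have "\<dots> = c * (1/2) ^ (m - p) * (1/2) ^ s * (\<Sum>q\<le>n - s. (1/2) ^ (n - s - q))"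
      by (simp add: sum_distrib_left)
    also have "\<dots> \<le> c * (1/2) ^ (m - p) * (1/2) ^ s * 2"
      using c by (intro mult_left_mono sum_half_power_diff_le) auto
    finally show ?thesis by simp
  qed
  have "norm (\<Sum>p\<le>m. \<Sum>s\<le>n. \<Sum>q\<le>(m - p) + (n - s). E p s q)
      \<le> (\<Sum>p\<le>m. \<Sum>s\<le>n. 2 * c * ((1/2) ^ (m - p) * (1/2) ^ s))"
    by (intro sum_norm_le order_trans[OF norm_sum] sum_mono q_sum) auto
  also have "\<dots> = 2 * c * ((\<Sum>p\<le>m. (1/2) ^ (m - p)) * (\<Sum>s\<le>n. (1/2) ^ s))"
    unfolding sum_product by (simp only: sum_distrib_left)
  also have "\<dots> \<le> 2 * c * (2 * 2)"
    using c by (intro mult_mono sum_half_power_diff_le sum_half_power_le)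
      (auto intro!: sum_nonneg mult_nonneg_nonneg)
  finally show ?thesis by simp
qed

lemma norm_b_free_term_le:
  fixes u :: complex and M R S :: real
  assumes u_le: "norm u \<le> M * R ^ (p + k) * S ^ q * fact q"
    and k: "k \<ge> 1" and R: "0 < R" "R \<le> S" "16 * 4 ^ (i + k) * R \<le> S" and M: "0 \<le> M"
  shows "norm (u * of_int (nord q (i + k) i (q + k))) * 2 ^ (i + k)
    \<le> M * R ^ p * S ^ (q + k) * fact (q + k) / 16"
proof -
  obtain k' where k': "k = Suc k'" using k by (cases k) auto
  have "norm (u * of_int (nord q (i + k) i (q + k))) * 2 ^ (i + k)
      \<le> (M * R ^ (p + k) * S ^ q * fact q) * (2 ^ (i + k) * real (pochhammer q k)) * 2 ^ (i + k)"
    unfolding norm_mult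
    using u_le order_trans[OF norm_ge_zero u_le] norm_nord_le[of q "i + k" i "q + k"]
    by (intro mult_right_mono mult_mono) auto
  also have "\<dots>
      = M * R ^ p * S ^ q * R ^ k' * (16 * 4 ^ (i + k) * R) * (fact q * pochhammer q k) / 16"
    by (simp add: k' power_add algebra_simps flip: power_mult_distrib)
  also have "\<dots> \<le> M * R ^ p * S ^ q * S ^ k' * S * fact (q + k) / 16"
    using R M fact_mult_pochhammer_le[of q k]
    by (intro divide_right_mono mult_mono power_mono) auto
  also have "\<dots> = M * R ^ p * S ^ (q + k) * fact (q + k) / 16"
    by (simp add: k' power_add algebra_simps)
  finally show ?thesis .
qed

lemma norm_b_term_le:
  fixes u x :: complex and M R S T Cx :: real
  assumes u_le: "norm u \<le> M * R ^ p' * S ^ q * fact q"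
    and x_le: "norm x \<le> Cx * T ^ (i + k + s) * fact s"
    and p': "p' + i = p + p0" and s: "s \<ge> 1"
    and T: "0 < T" "R = 4 * T" and S: "R \<le> S" "32 * Cx * R ^ p0 * T \<le> S"
    and M: "0 \<le> M" and Cx: "0 \<le> Cx"
  shows "norm (u * x * of_int (nord q (i + k) i (q + k))) * 2 ^ (i + k + s)
    \<le> M * R ^ p * S ^ (q + k + s) * fact (q + k + s) / 16"
proof -
  obtain s' where s': "s = Suc s'" using s by (cases s) auto
  have fact_le: "fact q * real (pochhammer q k) * fact s \<le> fact (q + k + s)"
    using fact_mult_pochhammer_le[of q k] fact_mult_fact_le[of "q + k" s]
    by (meson fact_ge_zero mult_right_mono order_trans)
  have pow_eq:
    "T ^ (i + k + s) * 2 ^ (i + k) * 2 ^ (i + k + s) = R ^ i * R ^ k * (2 * T) ^ s' * (2 * T)"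
  proof -
    have "T ^ (i + k + s) * 2 ^ (i + k) * 2 ^ (i + k + s) = (2 * 2 * T) ^ (i + k) * (2 * T) ^ Suc s'"
      unfolding s' by (simp only: power_mult_distrib power_add mult_ac)
    also have "\<dots> = R ^ i * R ^ k * (2 * T) ^ s' * (2 * T)"
      by (simp add: T(2) power_add)
    finally show ?thesis .
  qed
  have R_pow: "R ^ p' * R ^ i = R ^ p * R ^ p0"
    using p' by (metis power_add)
  have "norm (u * x * of_int (nord q (i + k) i (q + k))) * 2 ^ (i + k + s)
      \<le> (M * R ^ p' * S ^ q * fact q) * (Cx * T ^ (i + k + s) * fact s)
        * (2 ^ (i + k) * real (pochhammer q k)) * 2 ^ (i + k + s)"
    unfolding norm_mult using u_le x_le norm_nord_le[of q "i + k" i "q + k"]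
      order_trans[OF norm_ge_zero u_le] order_trans[OF norm_ge_zero x_le]
    by (intro mult_right_mono mult_mono) auto
  also have "\<dots> = M * R ^ p' * S ^ q * Cx * (T ^ (i + k + s) * 2 ^ (i + k) * 2 ^ (i + k + s))
        * (fact q * real (pochhammer q k) * fact s)"
    by (simp only: mult_ac)
  also have "\<dots> = M * (R ^ p' * R ^ i) * S ^ q * R ^ k * (2 * T) ^ s' * (2 * Cx * T)
        * (fact q * real (pochhammer q k) * fact s)"
    unfolding pow_eq by (simp only: mult_ac)
  also have "\<dots> = M * R ^ p * S ^ q * R ^ k * (2 * T) ^ s' * (2 * Cx * R ^ p0 * T)
        * (fact q * real (pochhammer q k) * fact s)"
    unfolding R_pow by (simp only: mult_ac)
  also have "\<dots> \<le> M * R ^ p * S ^ q * S ^ k * S ^ s' * (S / 16) * fact (q + k + s)"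
    using T S M Cx fact_le by (intro mult_mono power_mono) auto
  also have "\<dots> = M * R ^ p * S ^ (q + k + s) * fact (q + k + s) / 16"
    by (simp add: s' power_add mult_ac)
  finally show ?thesis .
qed

lemma norm_offdiag_term_le:
  fixes U X :: ser and M R S T Cx :: real
  assumes X0: "\<And>r. X r 0 = (if r = p0 then 1 else 0)"
    and X_le: "\<And>r s. norm (X r s) \<le> Cx * T ^ (r + s) * fact s"
    and IH: "\<And>p' q. q < n \<Longrightarrow> norm (U p' q) \<le> M * R ^ p' * S ^ q * fact q"
    and T: "0 < T" "R = 4 * T"
    and S: "R \<le> S" "16 * 4 ^ p0 * R \<le> S" "32 * Cx * R ^ p0 * T \<le> S"
    and M: "0 \<le> M" and Cx: "0 \<le> Cx"
    and idx: "p' \<le> p + p0" "s \<le> n" "q \<le> n - s"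
    and offdiag: "\<not> (p' = p \<and> s = 0 \<and> q = n)"
  shows "norm (U p' q * X ((p + p0 - p') + (n - s) - q) s
      * of_int (nord q ((p + p0 - p') + (n - s) - q) (p + p0 - p') (n - s)))
      * 2 ^ ((p + p0 - p') + (n - s - q) + s) \<le> M * R ^ p * S ^ n * fact n / 16"
proof -
  define i where "i = p + p0 - p'"
  define k where "k = n - s - q"
  have idx': "(p + p0 - p') + (n - s) - q = i + k" "n - s - q = k" "p + p0 - p' = i"
    "n - s = q + k" "n = q + k + s" "p' + i = p + p0"
    using idx unfolding i_def k_def by auto
  show ?thesis
    unfolding idx'(1) unfolding idx'(2) unfolding idx'(3) unfolding idx'(4) unfolding idx'(5)
  proof (cases "s = 0")
    case s: True
    show "norm (U p' q * X (i + k) s * of_int (nord q (i + k) i (q + k))) * 2 ^ (i + k + s)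
        \<le> M * R ^ p * S ^ (q + k + s) * fact (q + k + s) / 16"
    proof (cases "i + k = p0")
      case False
      then show ?thesis using s X0 T S M by simp
    next
      case True
      with s offdiag idx'(5,6) have "k \<ge> 1" "p' = p + k" by auto
      then have "norm (U p' q * of_int (nord q (i + k) i (q + k))) * 2 ^ (i + k)
          \<le> M * R ^ p * S ^ (q + k) * fact (q + k) / 16"
        using IH[of q p'] idx'(5) True T S M by (intro norm_b_free_term_le) auto
      then show ?thesis using s True X0 by simp
    qed
  next
    case False
    then show "norm (U p' q * X (i + k) s * of_int (nord q (i + k) i (q + k))) * 2 ^ (i + k + s)
        \<le> M * R ^ p * S ^ (q + k + s) * fact (q + k + s) / 16"
      using idx'(5) T S M Cx
      by (intro norm_b_term_le[OF IH[of q p'] X_le[of "i + k" s] idx'(6)]) auto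
  qed
qed

lemma norm_coeff_le_step:
  fixes U X :: ser and M R S T Cx :: real
  assumes X0: "\<And>r. X r 0 = (if r = p0 then 1 else 0)"
    and X_le: "\<And>r s. norm (X r s) \<le> Cx * T ^ (r + s) * fact s"
    and IH: "\<And>p' q. q < n \<Longrightarrow> norm (U p' q) \<le> M * R ^ p' * S ^ q * fact q"
    and V_le: "norm (ser_mul U X (p + p0) n) \<le> M * R ^ p * S ^ n * fact n / 2"
    and T: "0 < T" "R = 4 * T"
    and S: "R \<le> S" "16 * 4 ^ p0 * R \<le> S" "32 * Cx * R ^ p0 * T \<le> S"
    and M: "0 \<le> M" and Cx: "0 \<le> Cx"
  shows "norm (U p n) \<le> M * R ^ p * S ^ n * fact n"
proof -
  let ?K = "M * R ^ p * S ^ n * fact n"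
  let ?E = "\<lambda>p' s q. if p' = p \<and> s = 0 \<and> q = n then 0
      else U p' q * X ((p + p0 - p') + (n - s) - q) s
             * of_int (nord q ((p + p0 - p') + (n - s) - q) (p + p0 - p') (n - s))"
  have split: "ser_mul U X (p + p0) n
      = U p n + (\<Sum>p'\<le>p + p0. \<Sum>s\<le>n. \<Sum>q\<le>(p + p0 - p') + (n - s). ?E p' s q)"
    by (rule ser_mul_coeff_eq_diag_add) (rule X0)
  have "norm (\<Sum>p'\<le>p + p0. \<Sum>s\<le>n. \<Sum>q\<le>(p + p0 - p') + (n - s). ?E p' s q)
      \<le> 8 * (?K / 16)"
  proof (rule norm_triple_sum_le)
    fix p' s q
    assume idx: "p' \<le> p + p0" "s \<le> n" "q \<le> n - s"
    show "norm (?E p' s q) * 2 ^ ((p + p0 - p') + (n - s - q) + s) \<le> ?K / 16"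
      using norm_offdiag_term_le[OF X0 X_le IH T S M Cx idx] T S M by auto
  next
    fix p' s q :: nat
    assume "n - s < q"
    then show "?E p' s q = 0" by (simp add: nord_eq_0)
  qed
  then have "norm (ser_mul U X (p + p0) n - U p n) \<le> ?K / 2"
    unfolding split by (simp add: mult_ac)
  then show ?thesis
    using V_le
      norm_triangle_ineq4[of "ser_mul U X (p + p0) n" "ser_mul U X (p + p0) n - U p n"]
    by simp
qed

lemma conv_of_conv_ser_mul:
  assumes X: "conv X" and X0: "\<And>r. X r 0 = (if r = p0 then 1 else 0)"
    and V: "conv (ser_mul U X)"
  shows "conv U"
proof -
  obtain Rx Cx where Rx: "Rx > 1" and Cx: "Cx > 0"
    and X_le': "\<And>r s. norm (X r s) \<le> Cx * Rx ^ (r + s) * fact s"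
    using X unfolding conv_def by blast
  obtain Rv Cv where Rv: "Rv > 1" and Cv: "Cv > 0"
    and V_le': "\<And>m n. norm (ser_mul U X m n) \<le> Cv * Rv ^ (m + n) * fact n"
    using V unfolding conv_def by blast
  define T where "T = max Rx Rv"
  define R where "R = 4 * T"
  define S where "S = 32 * 4 ^ p0 * R * (1 + Cx * R ^ p0)"
  define M where "M = 2 * Cv * T ^ p0"
  have T: "T \<ge> 1" "0 < T" and R: "R = 4 * T" "R \<ge> 1"
    using Rx unfolding T_def R_def by auto
  have X_le: "norm (X r s) \<le> Cx * T ^ (r + s) * fact s" for r s
    using X_le'[of r s] Rx Cx unfolding T_def
    by (elim order_trans, intro mult_right_mono mult_left_mono power_mono) auto
  have V_le: "norm (ser_mul U X m n) \<le> Cv * T ^ (m + n) * fact n" for m n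
    using V_le'[of m n] Rv Cv unfolding T_def
    by (elim order_trans, intro mult_right_mono mult_left_mono power_mono) auto
  have CR: "0 \<le> Cx * R ^ p0" using Cx R by simp
  have "R \<le> 4 ^ p0 * R"
    using R mult_right_mono[OF one_le_power[of "4::real" p0], of R] by simp
  then have R_le: "R \<le> 4 ^ p0 * R" "T \<le> 4 ^ p0 * R"
    using R T by linarith+
  have S_ge: "16 * 4 ^ p0 * R \<le> S" "32 * Cx * R ^ p0 * T \<le> S"
  proof -
    have "16 * 4 ^ p0 * R \<le> 32 * 4 ^ p0 * R * 1"
      using R by simp
    also have "\<dots> \<le> S"
      unfolding S_def using R CR by (intro mult_left_mono) auto
    finally show "16 * 4 ^ p0 * R \<le> S" .
    have "32 * Cx * R ^ p0 * T = (32 * T) * (Cx * R ^ p0)"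
      by (simp add: mult_ac)
    also have "\<dots> \<le> (32 * 4 ^ p0 * R) * (1 + Cx * R ^ p0)"
      using R_le(2) CR R by (intro mult_mono) auto
    finally show "32 * Cx * R ^ p0 * T \<le> S"
      unfolding S_def .
  qed
  have RS: "R \<le> S"
    using S_ge(1) R_le(1) R mult.assoc[of 16 "4 ^ p0" R] by linarith
  have M: "M > 0" unfolding M_def using Cv T by simp
  have U_le: "norm (U p n) \<le> M * R ^ p * S ^ n * fact n" for p n
  proof (induction n arbitrary: p rule: less_induct)
    case (less n)
    have IH: "norm (U p' q) \<le> M * R ^ p' * S ^ q * fact q" if "q < n" for p' q
      using less.IH that .
    have "norm (ser_mul U X (p + p0) n) \<le> M * T ^ p * T ^ n * fact n / 2"
      using V_le[of "p + p0" n] by (simp add: M_def power_add mult_ac)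
    also have "\<dots> \<le> M * R ^ p * S ^ n * fact n / 2"
      using M T R RS by (intro divide_right_mono mult_right_mono mult_mono power_mono) auto
    finally show ?case
      using M Cx by (intro norm_coeff_le_step[OF X0 X_le IH _ T(2) R(1) RS S_ge]) auto
  qed
  show ?thesis
    unfolding conv_def
  proof (intro exI conjI allI)
    fix p q
    have "M * R ^ p * S ^ q * fact q \<le> M * S ^ p * S ^ q * fact q"
      using M R RS by (intro mult_right_mono mult_left_mono power_mono) auto
    then show "norm (U p q) \<le> M * S ^ (p + q) * fact q"
      using U_le[of p q] by (simp add: power_add)
  qed (use M T R RS in auto)
qed

theorem proposition1p4p2:
  fixes p0 :: nat and z U :: ser
  assumes "conv z"
    and "conv (ser_mul U (ser_add (gen_a_pow p0) (ser_mul gen_b z)))"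
  shows "conv U"
proof (rule conv_of_conv_ser_mul)
  show "conv (ser_add (gen_a_pow p0) (ser_mul gen_b z))"
    using assms(1) by (intro conv_ser_add conv_gen_a_pow conv_ser_mul_gen_b)
  show "ser_add (gen_a_pow p0) (ser_mul gen_b z) r 0 = (if r = p0 then 1 else 0)" for r
    by (simp add: ser_add_def gen_a_pow_def ser_mul_gen_b)
qed (use assms(2) in simp)

end
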